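(* Let $\bar B>0$, $\gamma>0$, and let $\{E_t\}_{t\ge1}$ be i.i.d. non-negative with $\mathbb{E}[E_t]>0$. Let $\mathbf{g}$ be a policy that is admissible when the initial battery level is $b_1=\bar{B}$. Then for every $\epsilon>0$ there exists a policy $\tilde{\mathbf{g}}$ that is admissible when the initial battery level is $b_1=0$ and satisfies \[ \liminf_{n\to\infty}\mathscr{T}_n(\tilde{\mathbf{g}})\geq \liminf_{n\to\infty}\mathscr{T}_n(\mathbf{g})-\epsilon, \] where the throughput of $\mathbf{g}$ is computed with $b_1=\bar B$ and that of $\tilde{\mathbf{g}}$ with $b_1=0$.
   Context: An online policy $\mathbf{g}=\{g_t\}_{t\ge1}$ is a sequence of maps $g_t$ from $(E_1,\ldots,E_t)$ to $\mathbb{R}_+$. It is admissible for initial battery level $b_1$ if for every realization of the arrivals, $0\le g_t\le b_t$ for all $t\ge1$, where $b_t=\min\{b_{t-1}-g_{t-1}+E_t,\bar{B}\}$ for $t\ge 2$. The $n$-horizon expected throughput is $\mathscr{T}_n(\mathbf{g})=\frac{1}{n}\mathbb{E}\big[\sum_{t=1}^{n}\frac12\log_2(1+\gamma g_t(E_1,\ldots,E_t))\big]$. *)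

theory Defs
  imports "HOL-Probability.Probability"
begin

text \<open>Arrival sequences are functions e :: nat => real, only the values e 1, e 2, ...
  being relevant (time starts at 1).\<close>

definition causal :: "(nat \<Rightarrow> (nat \<Rightarrow> real) \<Rightarrow> real) \<Rightarrow> bool" where
  "causal g \<longleftrightarrow> (\<forall>t\<ge>1. \<forall>e e'. (\<forall>i\<in>{1..t}. e i = e' i) \<longrightarrow> g t e = g t e')"

definition online_policy :: "(nat \<Rightarrow> (nat \<Rightarrow> real) \<Rightarrow> real) \<Rightarrow> bool" where
  "online_policy g \<longleftrightarrow> causal g \<and>
     (\<forall>t\<ge>1. g t \<in> borel_measurable (Pi\<^sub>M UNIV (\<lambda>_::nat. (borel :: real measure))))"

text \<open>Battery level: batt Bb b1 g e k is b_(k+1); so b_1 = b1 and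
  b_(t+1) = min (b_t - g_t + E_(t+1)) Bb.\<close>
primrec batt :: "real \<Rightarrow> real \<Rightarrow> (nat \<Rightarrow> (nat \<Rightarrow> real) \<Rightarrow> real) \<Rightarrow> (nat \<Rightarrow> real) \<Rightarrow> nat \<Rightarrow> real" where
  "batt Bb b1 g e 0 = b1"
| "batt Bb b1 g e (Suc k) = min (batt Bb b1 g e k - g (Suc k) e + e (Suc (Suc k))) Bb"

definition admissible :: "real \<Rightarrow> real \<Rightarrow> (nat \<Rightarrow> (nat \<Rightarrow> real) \<Rightarrow> real) \<Rightarrow> bool" where
  "admissible Bb b1 g \<longleftrightarrow>
     (\<forall>e::nat \<Rightarrow> real. (\<forall>i\<ge>1. 0 \<le> e i) \<longrightarrow>
        (\<forall>t\<ge>1. 0 \<le> g t e \<and> g t e \<le> batt Bb b1 g e (t - 1)))"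

definition throughput :: "'a measure \<Rightarrow> (nat \<Rightarrow> 'a \<Rightarrow> real) \<Rightarrow> real \<Rightarrow>
    (nat \<Rightarrow> (nat \<Rightarrow> real) \<Rightarrow> real) \<Rightarrow> nat \<Rightarrow> real" where
  "throughput M E \<gamma> g n =
     (1 / real n) * (\<integral>\<omega>. (\<Sum>t = 1..n. (1/2) * log 2 (1 + \<gamma> * g t (\<lambda>i. E i \<omega>))) \<partial>M)"

end

theory Submission
  imports Defs
begin

text \<open>Run the policy started with an empty battery with a deficit \<open>D\<close>, initially \<open>Bb\<close>: at each
  slot it spends what \<open>g\<close> spends minus the current deficit (if positive). Its battery is then
  always that of \<open>g\<close> minus the deficit, so admissibility carries over, and the deficit decreases
  at least by the withheld amount, so along every arrival path at most \<open>Bb\<close> is withheld in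
  total. The rate \<open>x \<mapsto> log\<^sub>2 (1 + \<gamma> x) / 2\<close> is \<open>\<gamma> / (2 ln 2)\<close>-Lipschitz on \<open>x \<ge> 0\<close>, so the
  accumulated throughput loss is bounded by \<open>\<gamma> Bb / (2 ln 2)\<close> uniformly in the horizon, and the
  average loss vanishes as \<open>n \<rightarrow> \<infinity>\<close>.\<close>

type_synonym policy = "nat \<Rightarrow> (nat \<Rightarrow> real) \<Rightarrow> real"

abbreviation arrival_space :: "(nat \<Rightarrow> real) measure" where
  "arrival_space \<equiv> Pi\<^sub>M UNIV (\<lambda>_. borel)"

abbreviation rate_sum :: "real \<Rightarrow> policy \<Rightarrow> nat \<Rightarrow> (nat \<Rightarrow> real) \<Rightarrow> real" where
  "rate_sum \<gamma> g n e \<equiv> \<Sum>t = 1..n. (1/2) * log 2 (1 + \<gamma> * g t e)"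

text \<open>\<open>deficit Bb g e k\<close> is the gap between the battery levels at time \<open>k + 1\<close> of \<open>g\<close> started
  full and of \<open>deficit_policy Bb g\<close> started empty (indexed like \<open>batt\<close>); the recursion is
  the difference of the two battery updates, see \<open>batt_deficit_policy\<close>.\<close>

primrec deficit :: "real \<Rightarrow> policy \<Rightarrow> (nat \<Rightarrow> real) \<Rightarrow> nat \<Rightarrow> real" where
  "deficit Bb g e 0 = Bb"
| "deficit Bb g e (Suc k) =
     min (batt Bb Bb g e k - g (Suc k) e + e (Suc (Suc k))) Bb
   - min (batt Bb Bb g e k - g (Suc k) e - max (deficit Bb g e k - g (Suc k) e) 0
          + e (Suc (Suc k))) Bb"

definition deficit_policy :: "real \<Rightarrow> policy \<Rightarrow> policy" where
  "deficit_policy Bb g t e = max 0 (g t e - deficit Bb g e (t - 1))"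

lemma deficit_policy_eq:
  "deficit_policy Bb g t e = g t e - min (deficit Bb g e (t - 1)) (g t e)"
  by (simp add: deficit_policy_def)

lemma deficit_policy_nonneg: "0 \<le> deficit_policy Bb g t e"
  by (simp add: deficit_policy_def)

lemma batt_deficit_policy:
  "batt Bb 0 (deficit_policy Bb g) e k = batt Bb Bb g e k - deficit Bb g e k"
  by (induction k) (simp_all add: deficit_policy_def)

lemma deficit_nonneg: "0 \<le> Bb \<Longrightarrow> 0 \<le> deficit Bb g e k"
  by (cases k) auto

lemma deficit_Suc_le:
  "deficit Bb g e (Suc k) \<le> deficit Bb g e k - min (deficit Bb g e k) (g (Suc k) e)"
  by simp

lemma sum_withheld_le:
  "(\<Sum>t = 1..n. min (deficit Bb g e (t - 1)) (g t e)) \<le> Bb - deficit Bb g e n"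
proof (induction n)
  case (Suc n)
  then show ?case
    using deficit_Suc_le[of Bb g e n] by simp
qed simp

lemma admissible_deficit_policy:
  assumes adm: "admissible Bb Bb g" and "0 \<le> Bb"
  shows "admissible Bb 0 (deficit_policy Bb g)"
  unfolding admissible_def
proof (intro allI impI conjI)
  fix e :: "nat \<Rightarrow> real"
  assume e: "\<forall>i\<ge>1. 0 \<le> e i"
  have "\<forall>t\<ge>1. g t e \<le> batt Bb Bb g e (t - 1)"
    using adm e unfolding admissible_def by blast
  then have g_le_batt: "g (Suc k) e \<le> batt Bb Bb g e k" for k
    by (metis diff_Suc_1 le_add1 plus_1_eq_Suc)
  have spend_le: "deficit_policy Bb g (Suc k) e \<le> batt Bb 0 (deficit_policy Bb g) e k"
    if "0 \<le> batt Bb 0 (deficit_policy Bb g) e k" for k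
    using that g_le_batt[of k] batt_deficit_policy[of Bb g e k]
    by (simp add: deficit_policy_def)
  have batt_nonneg: "0 \<le> batt Bb 0 (deficit_policy Bb g) e k" for k
  proof (induction k)
    case (Suc k)
    then show ?case
      using spend_le[of k] e \<open>0 \<le> Bb\<close> by simp
  qed simp
  fix t :: nat
  assume "1 \<le> t"
  then show "deficit_policy Bb g t e \<le> batt Bb 0 (deficit_policy Bb g) e (t - 1)"
    using spend_le[of "t - 1"] batt_nonneg[of "t - 1"] by simp
qed (rule deficit_policy_nonneg)

lemma ln_one_plus_diff_le:
  fixes a b :: real
  assumes "0 \<le> a" "a \<le> b"
  shows "ln (1 + b) - ln (1 + a) \<le> b - a"
proof -
  have "ln (1 + b) - ln (1 + a) = ln ((1 + b) / (1 + a))"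
    using assms by (simp add: ln_div)
  also have "\<dots> = ln (1 + (b - a) / (1 + a))"
    using assms by (simp add: field_simps)
  also have "\<dots> \<le> (b - a) / (1 + a)"
    using assms by (intro ln_add_one_self_le_self) simp
  also have "\<dots> \<le> (b - a) / 1"
    by (rule divide_left_mono) (use assms in auto)
  finally show ?thesis
    by simp
qed

lemma rate_diff_le:
  fixes \<gamma> x y :: real
  assumes "0 \<le> \<gamma>" "0 \<le> y" "y \<le> x"
  shows "(1/2) * log 2 (1 + \<gamma> * x) - (1/2) * log 2 (1 + \<gamma> * y) \<le> \<gamma> / (2 * ln 2) * (x - y)"
proof -
  have "(1/2) * log 2 (1 + \<gamma> * x) - (1/2) * log 2 (1 + \<gamma> * y)
      = (ln (1 + \<gamma> * x) - ln (1 + \<gamma> * y)) / (2 * ln 2)"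
    by (simp add: log_def field_simps)
  also have "\<dots> \<le> (\<gamma> * x - \<gamma> * y) / (2 * ln 2)"
    using assms by (intro divide_right_mono ln_one_plus_diff_le) (simp_all add: mult_left_mono)
  also have "\<dots> = \<gamma> / (2 * ln 2) * (x - y)"
    by (simp add: field_simps)
  finally show ?thesis .
qed

lemma rate_sum_deficit_policy_ge:
  fixes \<gamma> :: real
  assumes "0 \<le> \<gamma>" "0 \<le> Bb" "\<forall>t\<in>{1..n}. 0 \<le> g t e"
  shows "rate_sum \<gamma> g n e - \<gamma> * Bb / (2 * ln 2) \<le> rate_sum \<gamma> (deficit_policy Bb g) n e"
proof -
  let ?w = "\<lambda>t. min (deficit Bb g e (t - 1)) (g t e)"
  have "rate_sum \<gamma> g n e - rate_sum \<gamma> (deficit_policy Bb g) n e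
      = (\<Sum>t = 1..n. (1/2) * log 2 (1 + \<gamma> * g t e)
                    - (1/2) * log 2 (1 + \<gamma> * deficit_policy Bb g t e))"
    by (simp add: sum_subtractf)
  also have "\<dots> \<le> (\<Sum>t = 1..n. \<gamma> / (2 * ln 2) * ?w t)"
  proof (rule sum_mono)
    fix t
    assume "t \<in> {1..n}"
    then show "(1/2) * log 2 (1 + \<gamma> * g t e) - (1/2) * log 2 (1 + \<gamma> * deficit_policy Bb g t e)
        \<le> \<gamma> / (2 * ln 2) * ?w t"
      using rate_diff_le[OF \<open>0 \<le> \<gamma>\<close> deficit_policy_nonneg, of Bb g t e "g t e"] assms(3)
        deficit_nonneg[OF \<open>0 \<le> Bb\<close>] by (simp add: deficit_policy_eq)
  qed
  also have "\<dots> = \<gamma> / (2 * ln 2) * (\<Sum>t = 1..n. ?w t)"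
    by (simp add: sum_distrib_left)
  also have "\<dots> \<le> \<gamma> / (2 * ln 2) * Bb"
    using sum_withheld_le[of Bb g e n] deficit_nonneg[OF \<open>0 \<le> Bb\<close>, of g e n] \<open>0 \<le> \<gamma>\<close>
    by (intro mult_left_mono) auto
  finally show ?thesis
    by simp
qed

lemma rate_sum_deficit_policy_le:
  fixes \<gamma> :: real
  assumes "0 \<le> \<gamma>" "0 \<le> Bb" "\<forall>t\<in>{1..n}. 0 \<le> g t e"
  shows "rate_sum \<gamma> (deficit_policy Bb g) n e \<le> rate_sum \<gamma> g n e"
proof (rule sum_mono)
  fix t
  assume "t \<in> {1..n}"
  then have "deficit_policy Bb g t e \<le> g t e"
    using assms(3) deficit_nonneg[OF \<open>0 \<le> Bb\<close>] by (simp add: deficit_policy_def)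
  then show "(1/2) * log 2 (1 + \<gamma> * deficit_policy Bb g t e) \<le> (1/2) * log 2 (1 + \<gamma> * g t e)"
    using assms(1) deficit_policy_nonneg[of Bb g t e]
    by (simp add: add_pos_nonneg mult_left_mono)
qed

lemma rate_sum_nonneg:
  fixes \<gamma> :: real
  assumes "0 \<le> \<gamma>" "\<forall>t\<in>{1..n}. 0 \<le> g t e"
  shows "0 \<le> rate_sum \<gamma> g n e"
proof (rule sum_nonneg)
  fix t
  assume "t \<in> {1..n}"
  then have "1 \<le> 1 + \<gamma> * g t e"
    using assms by simp
  then show "0 \<le> (1/2) * log 2 (1 + \<gamma> * g t e)"
    by simp
qed

lemma causal_agree_upto:
  assumes "causal g" "\<forall>i\<in>{1..k}. e i = e' i" "1 \<le> t" "t \<le> k"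
  shows "g t e = g t e'"
  using assms unfolding causal_def by (meson atLeastAtMost_iff order_trans)

lemma batt_causal:
  assumes "causal g" "\<forall>i\<in>{1..Suc k}. e i = e' i"
  shows "batt Bb b g e k = batt Bb b g e' k"
  using assms(2)
  by (induction k) (simp_all add: causal_agree_upto[OF assms(1)])

lemma deficit_causal:
  assumes "causal g" "\<forall>i\<in>{1..Suc k}. e i = e' i"
  shows "deficit Bb g e k = deficit Bb g e' k"
  using assms(2)
proof (induction k)
  case (Suc k)
  have "g (Suc k) e = g (Suc k) e'"
    by (rule causal_agree_upto[OF assms(1) Suc.prems]) simp_all
  moreover have "batt Bb Bb g e k = batt Bb Bb g e' k"
    using batt_causal[OF assms(1)] Suc.prems by simp
  ultimately show ?case
    using Suc by simp
qed simp

lemma causal_deficit_policy: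
  assumes "causal g"
  shows "causal (deficit_policy Bb g)"
  unfolding causal_def
proof (intro allI impI)
  fix t :: nat and e e' :: "nat \<Rightarrow> real"
  assume "1 \<le> t" "\<forall>i\<in>{1..t}. e i = e' i"
  then show "deficit_policy Bb g t e = deficit_policy Bb g t e'"
    using causal_agree_upto[OF assms, of t e e' t] deficit_causal[OF assms, of "t - 1" e e']
    by (simp add: deficit_policy_def)
qed

lemma online_policy_measurable:
  "online_policy g \<Longrightarrow> 1 \<le> t \<Longrightarrow> g t \<in> borel_measurable arrival_space"
  by (simp add: online_policy_def)

lemma arrival_measurable: "(\<lambda>e. e i) \<in> borel_measurable arrival_space"
  by (simp add: measurable_component_singleton)

lemma batt_measurable:
  assumes "online_policy g"
  shows "(\<lambda>e. batt Bb b g e k) \<in> borel_measurable arrival_space"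
proof (induction k)
  case (Suc k)
  then show ?case
    using online_policy_measurable[OF assms, of "Suc k"] arrival_measurable by simp
qed simp

lemma deficit_measurable:
  assumes "online_policy g"
  shows "(\<lambda>e. deficit Bb g e k) \<in> borel_measurable arrival_space"
proof (induction k)
  case (Suc k)
  then show ?case
    using online_policy_measurable[OF assms, of "Suc k"] batt_measurable[OF assms]
      arrival_measurable by simp
qed simp

lemma online_policy_deficit_policy:
  assumes "online_policy g"
  shows "online_policy (deficit_policy Bb g)"
  unfolding online_policy_def
proof (intro conjI allI impI)
  show "causal (deficit_policy Bb g)"
    using assms causal_deficit_policy unfolding online_policy_def by blast
  fix t :: nat
  assume "1 \<le> t"
  then show "deficit_policy Bb g t \<in> borel_measurable arrival_space"
    unfolding deficit_policy_def[abs_def]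
    using online_policy_measurable[OF assms] deficit_measurable[OF assms] by simp
qed

text \<open>\<open>E 0\<close> need not be measurable; causality lets us replace it by \<open>0\<close>.\<close>

lemma rate_sum_measurable:
  assumes E: "\<And>t. t \<ge> 1 \<Longrightarrow> E t \<in> borel_measurable M" and g: "online_policy g"
  shows "(\<lambda>\<omega>. rate_sum \<gamma> g n (\<lambda>i. E i \<omega>)) \<in> borel_measurable M"
proof -
  let ?E0 = "\<lambda>\<omega> i. if i = 0 then 0 else E i \<omega>"
  have E0: "?E0 \<in> measurable M arrival_space"
  proof (rule measurable_PiM_single')
    fix i :: nat
    show "(\<lambda>\<omega>. if i = 0 then 0 else E i \<omega>) \<in> borel_measurable M"
      using E[of i] by (cases i) auto
  qed auto
  have "(\<lambda>\<omega>. rate_sum \<gamma> g n (?E0 \<omega>)) \<in> borel_measurable M"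
    using g unfolding online_policy_def
    by (intro borel_measurable_sum borel_measurable_times borel_measurable_log
        measurable_compose[OF E0]) auto
  moreover have "g t (?E0 \<omega>) = g t (\<lambda>i. E i \<omega>)" if "t \<in> {1..n}" for t \<omega>
    using g that unfolding online_policy_def causal_def by auto
  then have "rate_sum \<gamma> g n (?E0 \<omega>) = rate_sum \<gamma> g n (\<lambda>i. E i \<omega>)" for \<omega>
    by (intro sum.cong) simp_all
  ultimately show ?thesis
    by simp
qed

lemma (in prob_space) integral_diff_const_le:
  fixes f f' :: "'a \<Rightarrow> real"
  assumes f': "f' \<in> borel_measurable M" and "0 \<le> C"
    and bounds: "AE \<omega> in M. f \<omega> - C \<le> f' \<omega> \<and> f' \<omega> \<le> f \<omega>"
    and nonneg: "AE \<omega> in M. 0 \<le> f' \<omega>"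
  shows "integral\<^sup>L M f - C \<le> integral\<^sup>L M f'"
proof (cases "integrable M f")
  case True
  have "integrable M f'"
    by (rule Bochner_Integration.integrable_bound[OF True f'])
      (use bounds nonneg in \<open>auto elim!: AE_mp\<close>)
  with True have "integral\<^sup>L M (\<lambda>\<omega>. f \<omega> - C) \<le> integral\<^sup>L M f'"
    by (intro integral_mono_AE) (use bounds in \<open>auto elim!: AE_mp\<close>)
  with True show ?thesis
    by (simp add: prob_space)
next
  case False
  then show ?thesis
    using \<open>0 \<le> C\<close> integral_nonneg_AE[OF nonneg] by (simp add: not_integrable_integral_eq)
qed

lemma throughput_deficit_policy_ge:
  assumes "prob_space M" and "0 \<le> Bb" and "0 \<le> \<gamma>"
    and E: "\<And>t. t \<ge> 1 \<Longrightarrow> E t \<in> borel_measurable M"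
    and E_nonneg: "\<And>t. t \<ge> 1 \<Longrightarrow> AE \<omega> in M. 0 \<le> E t \<omega>"
    and g: "online_policy g" and adm: "admissible Bb Bb g"
  shows "throughput M E \<gamma> g n - \<gamma> * Bb / (2 * ln 2) / real n
    \<le> throughput M E \<gamma> (deficit_policy Bb g) n"
proof -
  interpret prob_space M by fact
  let ?C = "\<gamma> * Bb / (2 * ln 2)"
  let ?f = "\<lambda>\<omega>. rate_sum \<gamma> g n (\<lambda>i. E i \<omega>)"
  let ?f' = "\<lambda>\<omega>. rate_sum \<gamma> (deficit_policy Bb g) n (\<lambda>i. E i \<omega>)"
  have "AE \<omega> in M. \<forall>i::nat. i \<ge> 1 \<longrightarrow> 0 \<le> E i \<omega>"
    unfolding AE_all_countable using E_nonneg by (auto intro: AE_I2)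
  then have "AE \<omega> in M. \<forall>t\<in>{1..n}. 0 \<le> g t (\<lambda>i. E i \<omega>)"
    by (rule AE_mp) (use adm in \<open>auto simp: admissible_def\<close>)
  then have bounds: "AE \<omega> in M. ?f \<omega> - ?C \<le> ?f' \<omega> \<and> ?f' \<omega> \<le> ?f \<omega>"
    by (rule AE_mp) (use assms(2,3) rate_sum_deficit_policy_ge rate_sum_deficit_policy_le
        in \<open>auto intro!: AE_I2\<close>)
  have "integral\<^sup>L M ?f - ?C \<le> integral\<^sup>L M ?f'"
  proof (rule integral_diff_const_le[OF _ _ bounds])
    show "?f' \<in> borel_measurable M"
      by (rule rate_sum_measurable[OF E online_policy_deficit_policy[OF g]])
    show "0 \<le> ?C"
      using assms(2,3) by simp
    show "AE \<omega> in M. 0 \<le> ?f' \<omega>"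
      using \<open>0 \<le> \<gamma>\<close> deficit_policy_nonneg by (intro AE_I2 rate_sum_nonneg) simp_all
  qed
  then have "(1 / real n) * (integral\<^sup>L M ?f - ?C) \<le> (1 / real n) * integral\<^sup>L M ?f'"
    by (intro mult_left_mono) simp_all
  then show ?thesis
    unfolding throughput_def by (simp add: right_diff_distrib ac_simps)
qed

lemma liminf_ge_liminf_minus:
  fixes a b :: "nat \<Rightarrow> real"
  assumes "eventually (\<lambda>n. a n - \<epsilon> \<le> b n) sequentially"
  shows "liminf (\<lambda>n. ereal (a n)) - ereal \<epsilon> \<le> liminf (\<lambda>n. ereal (b n))"
proof -
  have "liminf (\<lambda>n. ereal (a n)) - ereal \<epsilon> = liminf (\<lambda>n. ereal (a n - \<epsilon>))"
    using Liminf_add_ereal_right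
      [where F = sequentially and g = "\<lambda>n. ereal (a n)" and c = "ereal (- \<epsilon>)"]
    by (simp add: minus_ereal_def)
  also have "\<dots> \<le> liminf (\<lambda>n. ereal (b n))"
    by (rule Liminf_mono) (use assms in \<open>auto elim!: eventually_mono\<close>)
  finally show ?thesis .
qed

theorem proposition6:
  fixes M :: "'a measure" and E :: "nat \<Rightarrow> 'a \<Rightarrow> real"
    and Bb \<gamma> \<epsilon> :: real and g :: "nat \<Rightarrow> (nat \<Rightarrow> real) \<Rightarrow> real"
  assumes "prob_space M"
    and "Bb > 0" and "\<gamma> > 0"
    and "\<And>t. t \<ge> 1 \<Longrightarrow> E t \<in> borel_measurable M"
    and "prob_space.indep_vars M (\<lambda>_. borel) E {1..}"
    and "\<And>t. t \<ge> 1 \<Longrightarrow> distr M borel (E t) = distr M borel (E 1)"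
    and "\<And>t. t \<ge> 1 \<Longrightarrow> AE \<omega> in M. 0 \<le> E t \<omega>"
    and "(\<integral>\<^sup>+ \<omega>. ennreal (E 1 \<omega>) \<partial>M) > 0"
    and "online_policy g" and "admissible Bb Bb g"
    and "\<epsilon> > 0"
  shows "\<exists>g'. online_policy g' \<and> admissible Bb 0 g' \<and>
           liminf (\<lambda>n. ereal (throughput M E \<gamma> g' n))
             \<ge> liminf (\<lambda>n. ereal (throughput M E \<gamma> g n)) - ereal \<epsilon>"
proof (intro exI conjI)
  show "online_policy (deficit_policy Bb g)"
    using \<open>online_policy g\<close> by (rule online_policy_deficit_policy)
  show "admissible Bb 0 (deficit_policy Bb g)"
    using \<open>admissible Bb Bb g\<close> \<open>Bb > 0\<close> by (simp add: admissible_deficit_policy)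
  let ?C = "\<gamma> * Bb / (2 * ln 2)"
  have "eventually (\<lambda>n. ?C / real n < \<epsilon>) sequentially"
    using lim_const_over_n \<open>\<epsilon> > 0\<close> by (rule order_tendstoD)
  then have "eventually (\<lambda>n. throughput M E \<gamma> g n - \<epsilon>
      \<le> throughput M E \<gamma> (deficit_policy Bb g) n) sequentially"
  proof (rule eventually_mono)
    fix n
    assume "?C / real n < \<epsilon>"
    moreover have "throughput M E \<gamma> g n - ?C / real n \<le> throughput M E \<gamma> (deficit_policy Bb g) n"
      using assms(1-4,7,9,10) by (intro throughput_deficit_policy_ge) simp_all
    ultimately show "throughput M E \<gamma> g n - \<epsilon> \<le> throughput M E \<gamma> (deficit_policy Bb g) n"
      by simp
  qed
  then show "liminf (\<lambda>n. ereal (throughput M E \<gamma> (deficit_policy Bb g) n))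
      \<ge> liminf (\<lambda>n. ereal (throughput M E \<gamma> g n)) - ereal \<epsilon>"
    by (rule liminf_ge_liminf_minus)
qed

end
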